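(* Let $H$ be a Hopf algebra with $S^2=\mathrm{id}$ and let $\tau$ be a Hopf automorphism of $H$ of finite order. Then $\exp_{\tau^{-1}}(H)=\exp_\tau(H)$ (in particular one exists if and only if the other does).
   Context: For a Hopf automorphism $\tau$ of $H$ of finite order and $n$ a multiple of that order, $h^{[n,\tau]}=\sum h_1(\tau\cdot h_2)(\tau^2\cdot h_3)\cdots(\tau^{n-1}\cdot h_n)$ (Sweedler notation). $\exp_\tau(H)$ is the smallest positive integer $n$, if it exists, that is a multiple of the order of $\tau$ and satisfies $h^{[n,\tau]}=\varepsilon(h)1$ for all $h\in H$. *)

theory Defs
  imports Complex_Main
begin

text \<open>An element of H \<otimes> H (resp. H \<otimes> H \<otimes> H) is represented
by a finite list of pairs (triples) of simple tensors; two such lists denote the same tensor iff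
they agree under all products of linear functionals (valid over a field).  The comultiplication
is given as a choice of representative Delta h for each h, i.e. Delta h = sum of h_1 \<otimes> h_2
(Sweedler notation).\<close>

definition teq2 :: "('k::field \<Rightarrow> 'h::ab_group_add \<Rightarrow> 'h) \<Rightarrow> ('h \<times> 'h) list \<Rightarrow> ('h \<times> 'h) list \<Rightarrow> bool" where
  "teq2 sc xs ys \<longleftrightarrow>
     (\<forall>\<phi> \<psi>. Vector_Spaces.linear sc (*) \<phi> \<longrightarrow> Vector_Spaces.linear sc (*) \<psi> \<longrightarrow>
        sum_list (map (\<lambda>(a,b). \<phi> a * \<psi> b) xs) = sum_list (map (\<lambda>(a,b). \<phi> a * \<psi> b) ys))"

definition teq3 :: "('k::field \<Rightarrow> 'h::ab_group_add \<Rightarrow> 'h) \<Rightarrow> ('h \<times> 'h \<times> 'h) list \<Rightarrow> ('h \<times> 'h \<times> 'h) list \<Rightarrow> bool" where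
  "teq3 sc xs ys \<longleftrightarrow>
     (\<forall>\<phi> \<psi> \<chi>. Vector_Spaces.linear sc (*) \<phi> \<longrightarrow> Vector_Spaces.linear sc (*) \<psi> \<longrightarrow> Vector_Spaces.linear sc (*) \<chi> \<longrightarrow>
        sum_list (map (\<lambda>(a,b,c). \<phi> a * \<psi> b * \<chi> c) xs) = sum_list (map (\<lambda>(a,b,c). \<phi> a * \<psi> b * \<chi> c) ys))"

definition hopf_algebra ::
  "('k::field \<Rightarrow> 'h::ring_1 \<Rightarrow> 'h) \<Rightarrow> ('h \<Rightarrow> ('h \<times> 'h) list) \<Rightarrow> ('h \<Rightarrow> 'k) \<Rightarrow> ('h \<Rightarrow> 'h) \<Rightarrow> bool" where
  "hopf_algebra sc \<Delta> \<epsilon> S \<longleftrightarrow>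
     \<comment> \<open>associative unital k-algebra\<close>
     vector_space sc \<and>
     (\<forall>c x y. sc c (x * y) = sc c x * y \<and> sc c (x * y) = x * sc c y) \<and>
     \<comment> \<open>comultiplication is linear\<close>
     (\<forall>x y. teq2 sc (\<Delta> (x + y)) (\<Delta> x @ \<Delta> y)) \<and>
     (\<forall>c x. teq2 sc (\<Delta> (sc c x)) (map (\<lambda>(a,b). (sc c a, b)) (\<Delta> x))) \<and>
     \<comment> \<open>coassociativity\<close>
     (\<forall>h. teq3 sc (concat (map (\<lambda>(a,b). map (\<lambda>(c,d). (c,d,b)) (\<Delta> a)) (\<Delta> h)))
                   (concat (map (\<lambda>(a,b). map (\<lambda>(c,d). (a,c,d)) (\<Delta> b)) (\<Delta> h)))) \<and>
     \<comment> \<open>counit\<close>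
     Vector_Spaces.linear sc (*) \<epsilon> \<and>
     (\<forall>h. sum_list (map (\<lambda>(a,b). sc (\<epsilon> a) b) (\<Delta> h)) = h \<and>
          sum_list (map (\<lambda>(a,b). sc (\<epsilon> b) a) (\<Delta> h)) = h) \<and>
     \<comment> \<open>comultiplication and counit are algebra maps\<close>
     (\<forall>x y. teq2 sc (\<Delta> (x * y)) (concat (map (\<lambda>(a,b). map (\<lambda>(c,d). (a * c, b * d)) (\<Delta> y)) (\<Delta> x)))) \<and>
     teq2 sc (\<Delta> 1) [(1, 1)] \<and>
     (\<forall>x y. \<epsilon> (x * y) = \<epsilon> x * \<epsilon> y) \<and> \<epsilon> 1 = 1 \<and>
     \<comment> \<open>antipode\<close>
     Vector_Spaces.linear sc sc S \<and>
     (\<forall>h. sum_list (map (\<lambda>(a,b). S a * b) (\<Delta> h)) = sc (\<epsilon> h) 1 \<and>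
          sum_list (map (\<lambda>(a,b). a * S b) (\<Delta> h)) = sc (\<epsilon> h) 1)"

definition hopf_automorphism ::
  "('k::field \<Rightarrow> 'h::ring_1 \<Rightarrow> 'h) \<Rightarrow> ('h \<Rightarrow> ('h \<times> 'h) list) \<Rightarrow> ('h \<Rightarrow> 'k) \<Rightarrow> ('h \<Rightarrow> 'h) \<Rightarrow> bool" where
  "hopf_automorphism sc \<Delta> \<epsilon> \<tau> \<longleftrightarrow>
     bij \<tau> \<and> Vector_Spaces.linear sc sc \<tau> \<and> \<tau> 1 = 1 \<and> (\<forall>x y. \<tau> (x * y) = \<tau> x * \<tau> y) \<and>
     (\<forall>h. teq2 sc (\<Delta> (\<tau> h)) (map (\<lambda>(a,b). (\<tau> a, \<tau> b)) (\<Delta> h))) \<and>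
     (\<forall>h. \<epsilon> (\<tau> h) = \<epsilon> h)"

definition fun_order :: "('h \<Rightarrow> 'h) \<Rightarrow> nat" where
  "fun_order \<tau> = (LEAST m. 0 < m \<and> \<tau> ^^ m = id)"

text \<open>Iterated comultiplication: comul_iter n h lists the (n+1)-fold tensors h_1 \<otimes> ... \<otimes> h_(n+1).\<close>
fun comul_iter :: "('h \<Rightarrow> ('h \<times> 'h) list) \<Rightarrow> nat \<Rightarrow> 'h \<Rightarrow> 'h list list" where
  "comul_iter \<Delta> 0 h = [[h]]"
| "comul_iter \<Delta> (Suc n) h = concat (map (\<lambda>(a,b). map (\<lambda>ys. a # ys) (comul_iter \<Delta> n b)) (\<Delta> h))"

definition twisted_power :: "('h \<Rightarrow> ('h \<times> 'h) list) \<Rightarrow> ('h::ring_1 \<Rightarrow> 'h) \<Rightarrow> nat \<Rightarrow> 'h \<Rightarrow> 'h" where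
  "twisted_power \<Delta> \<tau> n h =
     sum_list (map (\<lambda>xs. prod_list (map (\<lambda>i. (\<tau> ^^ i) (xs ! i)) [0..<n])) (comul_iter \<Delta> (n - 1) h))"

definition twisted_exp_cond ::
  "('k::field \<Rightarrow> 'h::ring_1 \<Rightarrow> 'h) \<Rightarrow> ('h \<Rightarrow> ('h \<times> 'h) list) \<Rightarrow> ('h \<Rightarrow> 'k) \<Rightarrow> ('h \<Rightarrow> 'h) \<Rightarrow> nat \<Rightarrow> bool" where
  "twisted_exp_cond sc \<Delta> \<epsilon> \<tau> n \<longleftrightarrow>
     0 < n \<and> fun_order \<tau> dvd n \<and> (\<forall>h. twisted_power \<Delta> \<tau> n h = sc (\<epsilon> h) 1)"

definition twisted_exp ::
  "('k::field \<Rightarrow> 'h::ring_1 \<Rightarrow> 'h) \<Rightarrow> ('h \<Rightarrow> ('h \<times> 'h) list) \<Rightarrow> ('h \<Rightarrow> 'k) \<Rightarrow> ('h \<Rightarrow> 'h) \<Rightarrow> nat option" where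
  "twisted_exp sc \<Delta> \<epsilon> \<tau> =
     (if \<exists>n. twisted_exp_cond sc \<Delta> \<epsilon> \<tau> n then Some (LEAST n. twisted_exp_cond sc \<Delta> \<epsilon> \<tau> n) else None)"

end

theory Submission imports Defs begin

text \<open>Write \<open>f \<star> g\<close> for convolution of linear endomorphisms and \<open>u h = \<epsilon>(h) 1\<close> for its unit.
If \<open>\<tau>\<^sup>N = id\<close>, then \<open>h\<^bsup>[N,\<tau>]\<^esup>\<close> is the convolution product \<open>id \<star> \<tau> \<star> \<dots> \<star> \<tau>\<^bsup>N-1\<^esup>\<close>.
Conjugation \<open>f \<mapsto> S \<circ> f \<circ> S\<close> reverses convolution products (the antipode is anti-multiplicative and
anti-comultiplicative), fixes \<open>u\<close>, and, because \<open>S\<^sup>2 = id\<close> and \<open>\<tau>\<close> commutes with \<open>S\<close>, fixes every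
\<open>\<tau>\<^sup>i\<close>. Hence \<open>id \<star> \<tau> \<star> \<dots> \<star> \<tau>\<^bsup>N-1\<^esup> = u\<close> implies \<open>\<tau>\<^bsup>N-1\<^esup> \<star> \<dots> \<star> \<tau> \<star> id = u\<close>, and since \<open>id\<close> is
convolution invertible (with inverse \<open>S\<close>) the last factor may be moved to the front:
\<open>id \<star> \<tau>\<^bsup>N-1\<^esup> \<star> \<dots> \<star> \<tau> = u\<close>. As \<open>\<tau>\<^bsup>N-i\<^esup> = (\<tau>\<^sup>-\<^sup>1)\<^sup>i\<close>, this says \<open>h\<^bsup>[N,\<tau>\<^sup>-\<^sup>1]\<^esup> = \<epsilon>(h) 1\<close>.
So \<open>\<tau>\<close> and \<open>\<tau>\<^sup>-\<^sup>1\<close>, which have the same order, satisfy the defining condition of the twisted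
exponent for the same \<open>N\<close>.\<close>

lemma vector_space_field_mult: "vector_space ((*) :: 'k::field \<Rightarrow> 'k \<Rightarrow> 'k)"
  by unfold_locales (auto simp: algebra_simps)

lemma sum_list_map_sum:
  "sum_list (map (\<lambda>z. \<Sum>i\<in>I. g i z) zs) = (\<Sum>i\<in>I. sum_list (map (g i) zs))"
  by (induction zs) (auto simp: sum.distrib)

lemma sum_list_map_sum_list_swap:
  fixes f :: "'a \<Rightarrow> 'b \<Rightarrow> 'c::comm_monoid_add"
  shows "sum_list (map (\<lambda>x. sum_list (map (f x) ys)) xs) =
         sum_list (map (\<lambda>y. sum_list (map (\<lambda>x. f x y) xs)) ys)"
  by (induction xs) (auto simp: sum_list_addf)

lemma funpow_inv_eq_id_iff: "bij f \<Longrightarrow> inv f ^^ m = id \<longleftrightarrow> f ^^ m = id"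
  by (metis bij_fn inv_fn inv_id inv_inv_eq)

lemma fun_order_inv: "bij f \<Longrightarrow> fun_order (inv f) = fun_order f"
  unfolding fun_order_def by (simp add: funpow_inv_eq_id_iff)

lemma funpow_eq_id_if_fun_order_dvd:
  assumes "\<exists>m>0. f ^^ m = id" and "fun_order f dvd n"
  shows "f ^^ n = id"
proof -
  have "f ^^ fun_order f = id"
    unfolding fun_order_def using LeastI_ex[OF assms(1)] by simp
  with assms(2) show ?thesis by (metis dvdE funpow_mult id_funpow)
qed

lemma funpow_inv_complement:
  assumes "bij f" and "f ^^ N = id" and "j \<le> N"
  shows "inv f ^^ (N - j) = f ^^ j"
proof
  fix x
  have "(f ^^ (N - j)) ((f ^^ j) x) = x"
    using assms(2,3) by (metis comp_apply funpow_add id_apply le_add_diff_inverse2)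
  then have "(inv f ^^ (N - j)) x = (inv f ^^ (N - j)) ((f ^^ (N - j)) ((f ^^ j) x))"
    by simp
  also have "\<dots> = (f ^^ j) x"
    using inv_fn_o_fn_is_id[OF assms(1)] by (simp add: fun_eq_iff)
  finally show "(inv f ^^ (N - j)) x = (f ^^ j) x" .
qed

locale hopf =
  fixes sc :: "'k::field \<Rightarrow> 'h::ring_1 \<Rightarrow> 'h" and \<Delta> :: "'h \<Rightarrow> ('h \<times> 'h) list"
    and \<epsilon> :: "'h \<Rightarrow> 'k" and S :: "'h \<Rightarrow> 'h"
  assumes hopf_algebra: "hopf_algebra sc \<Delta> \<epsilon> S"
begin

sublocale vector_space sc
  using hopf_algebra unfolding hopf_algebra_def by auto

definition lin_map :: "('h \<Rightarrow> 'h) \<Rightarrow> bool" where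
  "lin_map f \<longleftrightarrow> (\<forall>x y. f (x + y) = f x + f y) \<and> (\<forall>c x. f (sc c x) = sc c (f x))"

definition lin_functional :: "('h \<Rightarrow> 'k) \<Rightarrow> bool" where
  "lin_functional f \<longleftrightarrow> (\<forall>x y. f (x + y) = f x + f y) \<and> (\<forall>c x. f (sc c x) = c * f x)"

lemma lin_map_iff_linear: "lin_map f \<longleftrightarrow> Vector_Spaces.linear sc sc f"
  unfolding lin_map_def Vector_Spaces.linear_iff using vector_space_axioms by auto

lemma lin_functional_iff_linear: "lin_functional f \<longleftrightarrow> Vector_Spaces.linear sc (*) f"
  unfolding lin_functional_def Vector_Spaces.linear_iff
  using vector_space_axioms vector_space_field_mult by auto

lemma lin_map_zero: "lin_map f \<Longrightarrow> f 0 = 0"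
  unfolding lin_map_def by (metis add_cancel_right_right add_0)

lemma lin_functional_zero: "lin_functional f \<Longrightarrow> f 0 = 0"
  unfolding lin_functional_def by (metis add_cancel_right_right add_0)

lemma lin_map_sum_list:
  "lin_map f \<Longrightarrow> f (sum_list (map g xs)) = sum_list (map (\<lambda>x. f (g x)) xs)"
  by (induction xs) (auto simp: lin_map_zero, auto simp: lin_map_def)

lemma lin_functional_sum_list:
  "lin_functional f \<Longrightarrow> f (sum_list (map g xs)) = sum_list (map (\<lambda>x. f (g x)) xs)"
  by (induction xs) (auto simp: lin_functional_zero, auto simp: lin_functional_def)

lemma lin_functional_sum: "lin_functional f \<Longrightarrow> f (sum g A) = (\<Sum>x\<in>A. f (g x))"
  by (induction A rule: infinite_finite_induct)
    (auto simp: lin_functional_zero, auto simp: lin_functional_def)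

lemma lin_functional_comp: "lin_functional \<phi> \<Longrightarrow> lin_map f \<Longrightarrow> lin_functional (\<lambda>x. \<phi> (f x))"
  unfolding lin_functional_def lin_map_def by auto

definition fixed_basis :: "'h set" where
  "fixed_basis = extend_basis {}"

definition coord :: "'h \<Rightarrow> 'h \<Rightarrow> 'k" where
  "coord b v = representation fixed_basis v b"

definition coord_support :: "'h \<Rightarrow> 'h set" where
  "coord_support v = {b. coord b v \<noteq> 0}"

lemma independent_fixed_basis: "independent fixed_basis"
  and span_fixed_basis: "span fixed_basis = UNIV"
  unfolding fixed_basis_def
  using independent_extend_basis[OF independent_empty] span_extend_basis[OF independent_empty]
  by auto

lemma lin_functional_coord: "lin_functional (coord b)"
  unfolding lin_functional_iff_linear coord_def
  using linear_representation[OF independent_fixed_basis span_fixed_basis] .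

lemma finite_coord_support: "finite (coord_support v)"
  unfolding coord_support_def coord_def by (rule finite_representation)

lemma sum_coord_scale:
  assumes "finite E" and "coord_support v \<subseteq> E"
  shows "(\<Sum>b\<in>E. sc (coord b v) b) = v"
proof -
  have "(\<Sum>b\<in>E. sc (coord b v) b) = (\<Sum>b\<in>coord_support v. sc (coord b v) b)"
    by (rule sum.mono_neutral_cong_right) (use assms in \<open>auto simp: coord_support_def\<close>)
  also have "\<dots> = v"
    unfolding coord_support_def coord_def
    by (rule sum_nonzero_representation_eq) (use independent_fixed_basis span_fixed_basis in auto)
  finally show ?thesis .
qed

lemma lin_functional_coord_expansion:
  assumes "lin_functional f" and "finite E" and "coord_support v \<subseteq> E"
  shows "f v = (\<Sum>i\<in>E. coord i v * f i)"
proof -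
  have "f v = f (\<Sum>b\<in>E. sc (coord b v) b)"
    using sum_coord_scale[OF assms(2,3)] by simp
  also have "\<dots> = (\<Sum>i\<in>E. coord i v * f i)"
    using assms(1) by (simp add: lin_functional_sum) (simp add: lin_functional_def)
  finally show ?thesis .
qed

lemma eq_if_lin_functionals_eq:
  assumes "\<And>\<phi>. lin_functional \<phi> \<Longrightarrow> \<phi> x = \<phi> y"
  shows "x = y"
proof (rule ccontr)
  assume "x \<noteq> y"
  then have "coord_support (x - y) \<noteq> {}"
    using sum_coord_scale[of "{}" "x - y"] by auto
  then obtain b where "coord b (x - y) \<noteq> 0"
    unfolding coord_support_def by auto
  moreover have "coord b (x - y) = coord b x - coord b y"
    using lin_functional_coord[of b] unfolding lin_functional_def
    by (metis add_diff_cancel diff_add_cancel add_right_cancel)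
  ultimately show False
    using assms[OF lin_functional_coord] by simp
qed

definition bilin_functional :: "('h \<Rightarrow> 'h \<Rightarrow> 'k) \<Rightarrow> bool" where
  "bilin_functional B \<longleftrightarrow> (\<forall>b. lin_functional (\<lambda>a. B a b)) \<and> (\<forall>a. lin_functional (B a))"

definition trilin_functional :: "('h \<Rightarrow> 'h \<Rightarrow> 'h \<Rightarrow> 'k) \<Rightarrow> bool" where
  "trilin_functional T \<longleftrightarrow>
     (\<forall>b c. lin_functional (\<lambda>a. T a b c)) \<and> (\<forall>a c. lin_functional (\<lambda>b. T a b c)) \<and>
     (\<forall>a b. lin_functional (T a b))"

text \<open>\<open>teq2\<close> and \<open>teq3\<close> only test against products of linear functionals; expanding in a basis,
every multilinear functional is a linear combination of products of coordinate functionals.\<close>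

lemma sum_list_bilin_functional_coord_expansion:
  assumes B: "bilin_functional B" and E: "finite E"
    and zs: "\<forall>(a,b)\<in>set zs. coord_support a \<subseteq> E \<and> coord_support b \<subseteq> E"
  shows "sum_list (map (\<lambda>(a,b). B a b) zs) =
    (\<Sum>i\<in>E. \<Sum>j\<in>E. B i j * sum_list (map (\<lambda>(a,b). coord i a * coord j b) zs))"
proof -
  have "sum_list (map (\<lambda>(a,b). B a b) zs) =
    sum_list (map (\<lambda>(a,b). \<Sum>i\<in>E. \<Sum>j\<in>E. B i j * (coord i a * coord j b)) zs)"
  proof (intro arg_cong[where f=sum_list] map_cong refl, clarify)
    fix a b assume "(a, b) \<in> set zs"
    with zs have ab: "coord_support a \<subseteq> E" "coord_support b \<subseteq> E" by auto
    have "B a b = (\<Sum>i\<in>E. coord i a * B i b)"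
      using lin_functional_coord_expansion[OF _ E ab(1)] B unfolding bilin_functional_def by auto
    also have "\<dots> = (\<Sum>i\<in>E. coord i a * (\<Sum>j\<in>E. coord j b * B i j))"
      using lin_functional_coord_expansion[OF _ E ab(2)] B unfolding bilin_functional_def by auto
    finally show "B a b = (\<Sum>i\<in>E. \<Sum>j\<in>E. B i j * (coord i a * coord j b))"
      by (simp add: sum_distrib_left mult_ac)
  qed
  then show ?thesis
    by (simp add: case_prod_unfold sum_list_map_sum sum_list_const_mult)
qed

lemma sum_list_trilin_functional_coord_expansion:
  assumes T: "trilin_functional T" and E: "finite E"
    and zs: "\<forall>(a,b,c)\<in>set zs. coord_support a \<subseteq> E \<and> coord_support b \<subseteq> E \<and> coord_support c \<subseteq> E"
  shows "sum_list (map (\<lambda>(a,b,c). T a b c) zs) =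
    (\<Sum>i\<in>E. \<Sum>j\<in>E. \<Sum>l\<in>E. T i j l *
       sum_list (map (\<lambda>(a,b,c). coord i a * coord j b * coord l c) zs))"
proof -
  have "sum_list (map (\<lambda>(a,b,c). T a b c) zs) =
    sum_list (map (\<lambda>(a,b,c). \<Sum>i\<in>E. \<Sum>j\<in>E. \<Sum>l\<in>E. T i j l * (coord i a * coord j b * coord l c)) zs)"
  proof (intro arg_cong[where f=sum_list] map_cong refl, clarify)
    fix a b c assume "(a, b, c) \<in> set zs"
    with zs have abc: "coord_support a \<subseteq> E" "coord_support b \<subseteq> E" "coord_support c \<subseteq> E"
      by auto
    have "T a b c = (\<Sum>i\<in>E. coord i a * T i b c)"
      using lin_functional_coord_expansion[OF _ E abc(1)] T unfolding trilin_functional_def by auto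
    also have "\<dots> = (\<Sum>i\<in>E. coord i a * (\<Sum>j\<in>E. coord j b * T i j c))"
      using lin_functional_coord_expansion[OF _ E abc(2)] T unfolding trilin_functional_def by auto
    also have "\<dots> = (\<Sum>i\<in>E. coord i a * (\<Sum>j\<in>E. coord j b * (\<Sum>l\<in>E. coord l c * T i j l)))"
      using lin_functional_coord_expansion[OF _ E abc(3)] T unfolding trilin_functional_def by auto
    finally show "T a b c = (\<Sum>i\<in>E. \<Sum>j\<in>E. \<Sum>l\<in>E. T i j l * (coord i a * coord j b * coord l c))"
      by (simp add: sum_distrib_left mult_ac)
  qed
  then show ?thesis
    by (simp add: case_prod_unfold sum_list_map_sum sum_list_const_mult)
qed

lemma sum_list_bilin_functional_teq2:
  assumes B: "bilin_functional B" and "teq2 sc xs ys"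
  shows "sum_list (map (\<lambda>(a,b). B a b) xs) = sum_list (map (\<lambda>(a,b). B a b) ys)"
proof -
  define E where "E = (\<Union>v\<in>fst ` set xs \<union> snd ` set xs \<union> fst ` set ys \<union> snd ` set ys. coord_support v)"
  have E: "finite E"
    unfolding E_def by (auto simp: finite_coord_support)
  have xs: "\<forall>(a,b)\<in>set xs. coord_support a \<subseteq> E \<and> coord_support b \<subseteq> E"
    and ys: "\<forall>(a,b)\<in>set ys. coord_support a \<subseteq> E \<and> coord_support b \<subseteq> E"
    unfolding E_def by force+
  have "sum_list (map (\<lambda>(a,b). coord i a * coord j b) xs) =
                 sum_list (map (\<lambda>(a,b). coord i a * coord j b) ys)" for i j
    using assms(2) lin_functional_coord unfolding teq2_def lin_functional_iff_linear by blast
  then show ?thesis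
    unfolding sum_list_bilin_functional_coord_expansion[OF B E xs]
      sum_list_bilin_functional_coord_expansion[OF B E ys] by simp
qed

lemma sum_list_trilin_functional_teq3:
  assumes T: "trilin_functional T" and "teq3 sc xs ys"
  shows "sum_list (map (\<lambda>(a,b,c). T a b c) xs) = sum_list (map (\<lambda>(a,b,c). T a b c) ys)"
proof -
  define entries where
    "entries zs = fst ` set zs \<union> (fst \<circ> snd) ` set zs \<union> (snd \<circ> snd) ` set zs" for zs :: "('h \<times> 'h \<times> 'h) list"
  define E where "E = (\<Union>v\<in>entries xs \<union> entries ys. coord_support v)"
  have E: "finite E"
    unfolding E_def entries_def by (auto simp: finite_coord_support)
  have xs: "\<forall>(a,b,c)\<in>set xs. coord_support a \<subseteq> E \<and> coord_support b \<subseteq> E \<and> coord_support c \<subseteq> E"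
    and ys: "\<forall>(a,b,c)\<in>set ys. coord_support a \<subseteq> E \<and> coord_support b \<subseteq> E \<and> coord_support c \<subseteq> E"
    unfolding E_def entries_def by force+
  have "sum_list (map (\<lambda>(a,b,c). coord i a * coord j b * coord l c) xs) =
                 sum_list (map (\<lambda>(a,b,c). coord i a * coord j b * coord l c) ys)" for i j l
    using assms(2) lin_functional_coord unfolding teq3_def lin_functional_iff_linear by blast
  then show ?thesis
    unfolding sum_list_trilin_functional_coord_expansion[OF T E xs]
      sum_list_trilin_functional_coord_expansion[OF T E ys] by simp
qed

definition bilin :: "('h \<Rightarrow> 'h \<Rightarrow> 'h) \<Rightarrow> bool" where
  "bilin B \<longleftrightarrow> (\<forall>b. lin_map (\<lambda>a. B a b)) \<and> (\<forall>a. lin_map (\<lambda>b. B a b))"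

definition trilin :: "('h \<Rightarrow> 'h \<Rightarrow> 'h \<Rightarrow> 'h) \<Rightarrow> bool" where
  "trilin T \<longleftrightarrow> (\<forall>b c. lin_map (\<lambda>a. T a b c)) \<and> (\<forall>a c. lin_map (\<lambda>b. T a b c)) \<and>
                 (\<forall>a b. lin_map (\<lambda>c. T a b c))"

lemma bilinI: "(\<And>b. lin_map (\<lambda>a. B a b)) \<Longrightarrow> (\<And>a. lin_map (\<lambda>b. B a b)) \<Longrightarrow> bilin B"
  unfolding bilin_def by auto

lemma trilinI:
  "(\<And>b c. lin_map (\<lambda>a. T a b c)) \<Longrightarrow> (\<And>a c. lin_map (\<lambda>b. T a b c)) \<Longrightarrow>
   (\<And>a b. lin_map (\<lambda>c. T a b c)) \<Longrightarrow> trilin T"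
  unfolding trilin_def by auto

lemma bilin_lin_map_left: "bilin F \<Longrightarrow> lin_map g \<Longrightarrow> lin_map (\<lambda>a. F (g a) y)"
  unfolding bilin_def lin_map_def by auto

lemma bilin_lin_map_right: "bilin F \<Longrightarrow> lin_map g \<Longrightarrow> lin_map (\<lambda>b. F x (g b))"
  unfolding bilin_def lin_map_def by auto

lemma bilin_left: "bilin F \<Longrightarrow> lin_map (\<lambda>a. F a y)"
  unfolding bilin_def by auto

lemma bilin_right: "bilin F \<Longrightarrow> lin_map (\<lambda>b. F x b)"
  unfolding bilin_def by auto

lemma sum_list_bilin_teq2:
  assumes "bilin B" and "teq2 sc xs ys"
  shows "sum_list (map (\<lambda>(a,b). B a b) xs) = sum_list (map (\<lambda>(a,b). B a b) ys)"
proof (rule eq_if_lin_functionals_eq)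
  fix \<phi> assume \<phi>: "lin_functional \<phi>"
  have "bilin_functional (\<lambda>a b. \<phi> (B a b))"
    using assms(1) \<phi> unfolding bilin_functional_def bilin_def by (auto intro: lin_functional_comp)
  from sum_list_bilin_functional_teq2[OF this assms(2)]
  show "\<phi> (sum_list (map (\<lambda>(a,b). B a b) xs)) = \<phi> (sum_list (map (\<lambda>(a,b). B a b) ys))"
    by (simp add: lin_functional_sum_list[OF \<phi>] case_prod_unfold)
qed

lemma sum_list_trilin_teq3:
  assumes "trilin T" and "teq3 sc xs ys"
  shows "sum_list (map (\<lambda>(a,b,c). T a b c) xs) = sum_list (map (\<lambda>(a,b,c). T a b c) ys)"
proof (rule eq_if_lin_functionals_eq)
  fix \<phi> assume \<phi>: "lin_functional \<phi>"
  have "trilin_functional (\<lambda>a b c. \<phi> (T a b c))"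
    using assms(1) \<phi> unfolding trilin_functional_def trilin_def by (auto intro: lin_functional_comp)
  from sum_list_trilin_functional_teq3[OF this assms(2)]
  show "\<phi> (sum_list (map (\<lambda>(a,b,c). T a b c) xs)) = \<phi> (sum_list (map (\<lambda>(a,b,c). T a b c) ys))"
    by (simp add: lin_functional_sum_list[OF \<phi>] case_prod_unfold)
qed

lemma scale_mult_left: "sc c (x * y) = sc c x * y"
  and scale_mult_right: "sc c (x * y) = x * sc c y"
  using hopf_algebra unfolding hopf_algebra_def by blast+

lemma scale_one_mult [simp]: "sc c 1 * y = sc c y"
  using scale_mult_left[of c 1 y] by simp

lemma mult_scale_one [simp]: "y * sc c 1 = sc c y"
  using scale_mult_right[of c y 1] by simp

lemma comult_add: "teq2 sc (\<Delta> (x + y)) (\<Delta> x @ \<Delta> y)"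
  and comult_scale: "teq2 sc (\<Delta> (sc c x)) (map (\<lambda>(a,b). (sc c a, b)) (\<Delta> x))"
  and coassoc: "teq3 sc (concat (map (\<lambda>(a,b). map (\<lambda>(c,d). (c,d,b)) (\<Delta> a)) (\<Delta> h)))
                         (concat (map (\<lambda>(a,b). map (\<lambda>(c,d). (a,c,d)) (\<Delta> b)) (\<Delta> h)))"
  and comult_mult:
    "teq2 sc (\<Delta> (x * y)) (concat (map (\<lambda>(a,b). map (\<lambda>(c,d). (a * c, b * d)) (\<Delta> y)) (\<Delta> x)))"
  and comult_one: "teq2 sc (\<Delta> 1) [(1, 1)]"
  and counit_mult: "\<epsilon> (x * y) = \<epsilon> x * \<epsilon> y"
  and counit_one: "\<epsilon> 1 = 1"
  using hopf_algebra unfolding hopf_algebra_def by auto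

lemma lin_functional_counit: "lin_functional \<epsilon>"
  using hopf_algebra unfolding hopf_algebra_def lin_functional_iff_linear by auto

lemma lin_map_antipode: "lin_map S"
  using hopf_algebra unfolding hopf_algebra_def lin_map_iff_linear by auto

definition sweedler :: "('h \<Rightarrow> 'h \<Rightarrow> 'a::monoid_add) \<Rightarrow> 'h \<Rightarrow> 'a" where
  "sweedler F h = sum_list (map (\<lambda>(a,b). F a b) (\<Delta> h))"

lemma counit_left: "sweedler (\<lambda>a b. sc (\<epsilon> a) b) h = h"
  and counit_right: "sweedler (\<lambda>a b. sc (\<epsilon> b) a) h = h"
  and antipode_left: "sweedler (\<lambda>a b. S a * b) h = sc (\<epsilon> h) 1"
  and antipode_right: "sweedler (\<lambda>a b. a * S b) h = sc (\<epsilon> h) 1"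
  using hopf_algebra unfolding hopf_algebra_def sweedler_def by auto

lemma lin_map_id: "lin_map (\<lambda>x. x)"
  unfolding lin_map_def by auto

lemma lin_map_comp: "lin_map f \<Longrightarrow> lin_map g \<Longrightarrow> lin_map (\<lambda>x. f (g x))"
  unfolding lin_map_def by auto

lemma lin_map_mult_right: "lin_map f \<Longrightarrow> lin_map (\<lambda>x. f x * z)"
  unfolding lin_map_def by (auto simp: distrib_right scale_mult_left)

lemma lin_map_mult_left: "lin_map f \<Longrightarrow> lin_map (\<lambda>x. z * f x)"
  unfolding lin_map_def by (auto simp: distrib_left scale_mult_right)

lemma lin_map_scale: "lin_map f \<Longrightarrow> lin_map (\<lambda>x. sc c (f x))"
  unfolding lin_map_def by (auto simp: scale_right_distrib)

lemma lin_map_inv: assumes "lin_map f" and "bij f" shows "lin_map (inv f)"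
  using assms unfolding lin_map_def by (metis bij_inv_eq_iff)

lemma bilin_mult: "lin_map f \<Longrightarrow> lin_map g \<Longrightarrow> bilin (\<lambda>a b. f a * g b)"
  by (intro bilinI lin_map_mult_right lin_map_mult_left)

lemma lin_map_sum_list_param:
  "(\<And>z. z \<in> set xs \<Longrightarrow> lin_map (\<lambda>x. F x z)) \<Longrightarrow> lin_map (\<lambda>x. sum_list (map (F x) xs))"
  unfolding lin_map_def by (induction xs) (auto simp: scale_right_distrib algebra_simps)

lemma lin_map_sweedler_param: "(\<And>a b. lin_map (\<lambda>x. F x a b)) \<Longrightarrow> lin_map (\<lambda>x. sweedler (F x) h)"
  unfolding sweedler_def by (rule lin_map_sum_list_param) auto

lemma lin_map_sweedler_comm: "lin_map f \<Longrightarrow> f (sweedler F h) = sweedler (\<lambda>a b. f (F a b)) h"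
  unfolding sweedler_def by (simp add: lin_map_sum_list case_prod_unfold)

lemma lin_functional_sweedler_comm:
  "lin_functional \<phi> \<Longrightarrow> \<phi> (sweedler F h) = sweedler (\<lambda>a b. \<phi> (F a b)) h"
  unfolding sweedler_def by (simp add: lin_functional_sum_list case_prod_unfold)

lemma sweedler_add: "bilin F \<Longrightarrow> sweedler F (x + y) = sweedler F x + sweedler F y"
  unfolding sweedler_def using sum_list_bilin_teq2[OF _ comult_add] by simp

lemma sweedler_scale: assumes F: "bilin F" shows "sweedler F (sc c x) = sc c (sweedler F x)"
proof -
  have "sweedler F (sc c x) = sum_list (map (\<lambda>(a,b). F a b) (map (\<lambda>(a,b). (sc c a, b)) (\<Delta> x)))"
    unfolding sweedler_def using sum_list_bilin_teq2[OF F comult_scale] by simp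
  also have "\<dots> = sweedler (\<lambda>a b. sc c (F a b)) x"
    using F unfolding bilin_def lin_map_def sweedler_def by (simp add: o_def case_prod_unfold)
  also have "\<dots> = sc c (sweedler F x)"
    by (rule lin_map_sweedler_comm[symmetric]) (intro lin_map_scale lin_map_id)
  finally show ?thesis .
qed

lemma lin_map_sweedler: "bilin F \<Longrightarrow> lin_map (\<lambda>x. sweedler F x)"
  unfolding lin_map_def using sweedler_add sweedler_scale by auto

lemma sweedler_mult_const: "sweedler (F :: 'h \<Rightarrow> 'h \<Rightarrow> 'h) h * z = sweedler (\<lambda>a b. F a b * z) h"
  unfolding sweedler_def sum_list_mult_const[symmetric] by (simp add: case_prod_unfold)

lemma sweedler_const_mult: "z * sweedler (F :: 'h \<Rightarrow> 'h \<Rightarrow> 'h) h = sweedler (\<lambda>a b. z * F a b) h"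
  unfolding sweedler_def sum_list_const_mult[symmetric] by (simp add: case_prod_unfold)

lemma sweedler_cong: "(\<And>a b. F a b = G a b) \<Longrightarrow> sweedler F h = sweedler G h"
  by (metis ext)

lemma sweedler_swap:
  "sweedler (\<lambda>a b. sweedler (\<lambda>c d. (X a b c d :: 'h)) y) x =
   sweedler (\<lambda>c d. sweedler (\<lambda>a b. X a b c d) x) y"
  unfolding sweedler_def
  using sum_list_map_sum_list_swap[of "\<lambda>p q. case p of (a,b) \<Rightarrow> case q of (c,d) \<Rightarrow> X a b c d" "\<Delta> y" "\<Delta> x"]
  by (simp add: case_prod_unfold)

lemma sweedler_coassoc:
  assumes "trilin T"
  shows "sweedler (\<lambda>a b. sweedler (\<lambda>c d. T c d b) a) h = sweedler (\<lambda>a b. sweedler (\<lambda>c d. T a c d) b) h"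
proof -
  have "sum_list (map (\<lambda>(a,b,c). T a b c) (concat (map (\<lambda>(a,b). map (\<lambda>(c,d). (c,d,b)) (\<Delta> a)) zs)))
      = sum_list (map (\<lambda>(a,b). sweedler (\<lambda>c d. T c d b) a) zs)"
    and "sum_list (map (\<lambda>(a,b,c). T a b c) (concat (map (\<lambda>(a,b). map (\<lambda>(c,d). (a,c,d)) (\<Delta> b)) zs)))
      = sum_list (map (\<lambda>(a,b). sweedler (\<lambda>c d. T a c d) b) zs)" for zs
    by (induction zs) (auto simp: sweedler_def o_def case_prod_unfold)
  with sum_list_trilin_teq3[OF assms coassoc, of h] show ?thesis
    unfolding sweedler_def by simp
qed

lemma sweedler_mult:
  assumes "bilin F"
  shows "sweedler F (x * y) = sweedler (\<lambda>a b. sweedler (\<lambda>c d. F (a * c) (b * d)) y) x"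
proof -
  have "sum_list (map (\<lambda>(a,b). F a b) (concat (map (\<lambda>(a,b). map (\<lambda>(c,d). (a * c, b * d)) (\<Delta> y)) zs)))
      = sum_list (map (\<lambda>(a,b). sweedler (\<lambda>c d. F (a * c) (b * d)) y) zs)" for zs
    by (induction zs) (auto simp: sweedler_def o_def case_prod_unfold)
  with sum_list_bilin_teq2[OF assms comult_mult, of x y] show ?thesis
    unfolding sweedler_def by simp
qed

lemma sweedler_one: "bilin F \<Longrightarrow> sweedler F 1 = F 1 1"
  using sum_list_bilin_teq2[OF _ comult_one] unfolding sweedler_def by simp

lemma sweedler_counit_left: "lin_map f \<Longrightarrow> sweedler (\<lambda>a b. sc (\<epsilon> a) (f b)) h = f h"
  using lin_map_sweedler_comm[of f "\<lambda>a b. sc (\<epsilon> a) b" h] counit_left[of h]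
  by (simp add: lin_map_def)

lemma sweedler_counit_right: "lin_map f \<Longrightarrow> sweedler (\<lambda>a b. sc (\<epsilon> b) (f a)) h = f h"
  using lin_map_sweedler_comm[of f "\<lambda>a b. sc (\<epsilon> b) a" h] counit_right[of h]
  by (simp add: lin_map_def)

definition conv :: "('h \<Rightarrow> 'h) \<Rightarrow> ('h \<Rightarrow> 'h) \<Rightarrow> 'h \<Rightarrow> 'h" where
  "conv f g h = sweedler (\<lambda>a b. f a * g b) h"

definition conv_unit :: "'h \<Rightarrow> 'h" where
  "conv_unit h = sc (\<epsilon> h) 1"

lemma lin_map_conv: "lin_map f \<Longrightarrow> lin_map g \<Longrightarrow> lin_map (conv f g)"
  unfolding conv_def[abs_def] by (intro lin_map_sweedler bilin_mult)

lemma conv_assoc: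
  assumes "lin_map f" and "lin_map g" and "lin_map k"
  shows "conv (conv f g) k = conv f (conv g k)"
proof
  fix h
  have "conv (conv f g) k h = sweedler (\<lambda>a b. sweedler (\<lambda>c d. f c * g d * k b) a) h"
    unfolding conv_def sweedler_mult_const ..
  also have "\<dots> = sweedler (\<lambda>a b. sweedler (\<lambda>c d. f a * g c * k d) b) h"
    by (rule sweedler_coassoc) (intro trilinI lin_map_mult_right lin_map_mult_left assms)
  also have "\<dots> = conv f (conv g k) h"
    unfolding conv_def sweedler_const_mult by (simp add: mult.assoc)
  finally show "conv (conv f g) k h = conv f (conv g k) h" .
qed

lemma conv_unit_right: "lin_map f \<Longrightarrow> conv f conv_unit = f"
  unfolding conv_def conv_unit_def
  using sweedler_counit_right[of f] by (simp add: lin_map_def fun_eq_iff)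

lemma conv_unit_left: "lin_map f \<Longrightarrow> conv conv_unit f = f"
  unfolding conv_def conv_unit_def
  using sweedler_counit_left[of f] by (simp add: lin_map_def fun_eq_iff)

lemma conv_id_antipode: "conv (\<lambda>x. x) S = conv_unit"
  unfolding conv_def[abs_def] conv_unit_def[abs_def] using antipode_right by auto

lemma conv_inverse_unique:
  assumes "lin_map f" "lin_map g" "lin_map g'" "conv g f = conv_unit" "conv f g' = conv_unit"
  shows "g = g'"
  by (metis assms conv_assoc conv_unit_left conv_unit_right)

lemma conv_id_commute:
  assumes X: "lin_map X" and "conv X (\<lambda>x. x) = conv_unit"
  shows "conv (\<lambda>x. x) X = conv_unit"
proof -
  have "conv (\<lambda>x. x) X = conv (conv (\<lambda>x. x) X) (conv (\<lambda>x. x) S)"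
    using conv_id_antipode conv_unit_right[OF lin_map_conv[OF lin_map_id X]] by simp
  also have "\<dots> = conv (conv (\<lambda>x. x) (conv X (\<lambda>x. x))) S"
    by (simp add: conv_assoc lin_map_conv lin_map_id X lin_map_antipode)
  also have "\<dots> = conv_unit"
    unfolding assms(2) conv_unit_right[OF lin_map_id] conv_id_antipode ..
  finally show ?thesis .
qed

definition conv2 :: "('h \<Rightarrow> 'h \<Rightarrow> 'h) \<Rightarrow> ('h \<Rightarrow> 'h \<Rightarrow> 'h) \<Rightarrow> 'h \<Rightarrow> 'h \<Rightarrow> 'h" where
  "conv2 F G x y = sweedler (\<lambda>a b. sweedler (\<lambda>c d. F a c * G b d) y) x"

definition conv2_unit :: "'h \<Rightarrow> 'h \<Rightarrow> 'h" where
  "conv2_unit x y = sc (\<epsilon> x * \<epsilon> y) 1"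

lemma conv2_assoc:
  assumes F: "bilin F" and G: "bilin G" and K: "bilin K"
  shows "conv2 (conv2 F G) K x y = conv2 F (conv2 G K) x y"
proof -
  have "conv2 (conv2 F G) K x y =
     sweedler (\<lambda>a b. sweedler (\<lambda>c d. sweedler (\<lambda>a1 a2. sweedler (\<lambda>c1 c2. F a1 c1 * G a2 c2 * K b d) c) a) y) x"
    unfolding conv2_def sweedler_mult_const ..
  also have "\<dots> = sweedler (\<lambda>a b. sweedler (\<lambda>a1 a2. sweedler (\<lambda>c d. sweedler (\<lambda>c1 c2. F a1 c1 * G a2 c2 * K b d) c) y) a) x"
    by (rule sweedler_cong, rule sweedler_swap)
  also have "\<dots> = sweedler (\<lambda>a r. sweedler (\<lambda>a2 b. sweedler (\<lambda>c d. sweedler (\<lambda>c1 c2. F a c1 * G a2 c2 * K b d) c) y) r) x"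
    by (rule sweedler_coassoc)
      (intro trilinI lin_map_sweedler_param lin_map_mult_right lin_map_mult_left
         bilin_left[OF F] bilin_left[OF G] bilin_left[OF K])
  also have "\<dots> = sweedler (\<lambda>a r. sweedler (\<lambda>a2 b. sweedler (\<lambda>c1 s. sweedler (\<lambda>c2 d. F a c1 * G a2 c2 * K b d) s) y) r) x"
    by (intro sweedler_cong sweedler_coassoc)
      (intro trilinI lin_map_sweedler_param lin_map_mult_right lin_map_mult_left
         bilin_right[OF F] bilin_right[OF G] bilin_right[OF K])
  also have "\<dots> = sweedler (\<lambda>a r. sweedler (\<lambda>c1 s. sweedler (\<lambda>a2 b. sweedler (\<lambda>c2 d. F a c1 * G a2 c2 * K b d) s) r) y) x"
    by (rule sweedler_cong, rule sweedler_swap)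
  also have "\<dots> = conv2 F (conv2 G K) x y"
    unfolding conv2_def sweedler_const_mult by (simp add: mult.assoc)
  finally show ?thesis .
qed

lemma conv2_unit_left:
  assumes F: "bilin F" shows "conv2 conv2_unit F x y = F x y"
proof -
  have "conv2 conv2_unit F x y = sweedler (\<lambda>a b. sweedler (\<lambda>c d. sc (\<epsilon> c) (sc (\<epsilon> a) (F b d))) y) x"
    unfolding conv2_def conv2_unit_def by (simp add: mult.commute)
  also have "\<dots> = sweedler (\<lambda>a b. sc (\<epsilon> a) (F b y)) x"
    by (intro sweedler_cong sweedler_counit_left lin_map_scale bilin_right[OF F])
  also have "\<dots> = F x y"
    by (intro sweedler_counit_left bilin_left[OF F])
  finally show ?thesis .
qed

lemma conv2_unit_right:
  assumes F: "bilin F" shows "conv2 F conv2_unit x y = F x y"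
proof -
  have "conv2 F conv2_unit x y = sweedler (\<lambda>a b. sweedler (\<lambda>c d. sc (\<epsilon> d) (sc (\<epsilon> b) (F a c))) y) x"
    unfolding conv2_def conv2_unit_def by (simp add: mult.commute)
  also have "\<dots> = sweedler (\<lambda>a b. sc (\<epsilon> b) (F a y)) x"
    by (intro sweedler_cong sweedler_counit_right lin_map_scale bilin_right[OF F])
  also have "\<dots> = F x y"
    by (intro sweedler_counit_right bilin_left[OF F])
  finally show ?thesis .
qed

lemma conv2_antipode_of_mult: "conv2 (\<lambda>a c. S (a * c)) (\<lambda>b d. b * d) = conv2_unit"
proof (intro ext)
  fix x y
  have "conv2 (\<lambda>a c. S (a * c)) (\<lambda>b d. b * d) x y = sweedler (\<lambda>u v. S u * v) (x * y)"
    unfolding conv2_def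
    by (rule sweedler_mult[symmetric]) (intro bilin_mult lin_map_antipode lin_map_id)
  then show "conv2 (\<lambda>a c. S (a * c)) (\<lambda>b d. b * d) x y = conv2_unit x y"
    unfolding conv2_unit_def antipode_left counit_mult .
qed

lemma conv2_mult_flipped_antipodes: "conv2 (\<lambda>b d. b * d) (\<lambda>b d. S d * S b) = conv2_unit"
proof (intro ext)
  fix x y
  have "conv2 (\<lambda>b d. b * d) (\<lambda>b d. S d * S b) x y =
        sweedler (\<lambda>a b. a * sweedler (\<lambda>c d. c * S d) y * S b) x"
    unfolding conv2_def sweedler_const_mult sweedler_mult_const by (simp add: mult.assoc)
  also have "\<dots> = sweedler (\<lambda>a b. sc (\<epsilon> y) (a * S b)) x"
    unfolding antipode_right by (simp add: scale_mult_left)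
  also have "\<dots> = sc (\<epsilon> y) (sweedler (\<lambda>a b. a * S b) x)"
    by (rule lin_map_sweedler_comm[symmetric], rule lin_map_scale[OF lin_map_id])
  also have "\<dots> = conv2_unit x y"
    unfolding conv2_unit_def antipode_right by (simp add: mult.commute)
  finally show "conv2 (\<lambda>b d. b * d) (\<lambda>b d. S d * S b) x y = conv2_unit x y" .
qed

text \<open>\<open>S (x * y)\<close> and \<open>S y * S x\<close> are a left and a right inverse of multiplication in the
convolution algebra of bilinear maps.\<close>

lemma antipode_mult: "S (x * y) = S y * S x"
proof -
  have S_mult: "bilin (\<lambda>a c. S (a * c))"
    by (intro bilinI lin_map_comp[OF lin_map_antipode] lin_map_mult_right lin_map_mult_left lin_map_id)
  have mult_S: "bilin (\<lambda>b d. S d * S b)"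
    by (intro bilinI lin_map_mult_right lin_map_mult_left lin_map_antipode)
  have mult: "bilin (\<lambda>b d. b * d)"
    by (intro bilinI lin_map_mult_right lin_map_mult_left lin_map_id)
  have "S y * S x = conv2 conv2_unit (\<lambda>b d. S d * S b) x y"
    using conv2_unit_left[OF mult_S] by simp
  also have "\<dots> = conv2 (\<lambda>a c. S (a * c)) (conv2 (\<lambda>b d. b * d) (\<lambda>b d. S d * S b)) x y"
    unfolding conv2_antipode_of_mult[symmetric] by (rule conv2_assoc[OF S_mult mult mult_S])
  also have "\<dots> = S (x * y)"
    unfolding conv2_mult_flipped_antipodes by (rule conv2_unit_right[OF S_mult])
  finally show ?thesis by simp
qed

lemma antipode_one: "S 1 = 1"
proof -
  have "sweedler (\<lambda>a b. S a * b) 1 = S 1 * 1"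
    by (rule sweedler_one) (intro bilin_mult lin_map_antipode lin_map_id)
  then show ?thesis
    using antipode_left[of 1] counit_one by simp
qed

lemma counit_scale_one: "\<epsilon> (sc c 1) = c"
  using lin_functional_counit counit_one unfolding lin_functional_def by simp

lemma counit_antipode: "\<epsilon> (S h) = \<epsilon> h"
proof -
  have "\<epsilon> (S h) = \<epsilon> (S (sweedler (\<lambda>a b. sc (\<epsilon> b) a) h))"
    using counit_right by simp
  also have "\<dots> = sweedler (\<lambda>a b. \<epsilon> b * \<epsilon> (S a)) h"
    using lin_map_antipode lin_functional_counit unfolding lin_map_def lin_functional_def
    by (simp add: lin_map_sweedler_comm[OF lin_map_antipode] lin_functional_sweedler_comm[OF lin_functional_counit])
  also have "\<dots> = \<epsilon> (sweedler (\<lambda>a b. S a * b) h)"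
    by (simp add: lin_functional_sweedler_comm[OF lin_functional_counit] counit_mult mult.commute)
  also have "\<dots> = \<epsilon> h"
    unfolding antipode_left counit_scale_one ..
  finally show ?thesis .
qed

lemma sweedler_antipode_nested:
  assumes G: "bilin G"
  shows "sweedler (\<lambda>q1 q2. sweedler (\<lambda>u v. sweedler (\<lambda>a b. G (u * S b) (v * S a)) q2) q1) q =
         sc (\<epsilon> q) (G 1 1)"
proof -
  have "sweedler (\<lambda>q1 q2. sweedler (\<lambda>u v. sweedler (\<lambda>a b. G (u * S b) (v * S a)) q2) q1) q
      = sweedler (\<lambda>u r. sweedler (\<lambda>v q2. sweedler (\<lambda>a b. G (u * S b) (v * S a)) q2) r) q"
    by (rule sweedler_coassoc)
      (intro trilinI lin_map_sweedler_param lin_map_sweedler bilinI bilin_lin_map_left[OF G]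
         bilin_lin_map_right[OF G] lin_map_mult_right lin_map_mult_left lin_map_id lin_map_antipode)
  also have "\<dots> = sweedler (\<lambda>u r. sweedler (\<lambda>s b. sweedler (\<lambda>v a. G (u * S b) (v * S a)) s) r) q"
    by (intro sweedler_cong sweedler_coassoc[symmetric])
      (intro trilinI bilin_lin_map_left[OF G] bilin_lin_map_right[OF G] lin_map_mult_right
         lin_map_mult_left lin_map_id lin_map_antipode)
  also have "\<dots> = sweedler (\<lambda>u r. sweedler (\<lambda>s b. sc (\<epsilon> s) (G (u * S b) 1)) r) q"
  proof (intro sweedler_cong)
    fix u r s b
    have "sweedler (\<lambda>v a. G (u * S b) (v * S a)) s = G (u * S b) (sweedler (\<lambda>v a. v * S a) s)"
      by (rule lin_map_sweedler_comm[symmetric]) (rule bilin_right[OF G])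
    then show "sweedler (\<lambda>v a. G (u * S b) (v * S a)) s = sc (\<epsilon> s) (G (u * S b) 1)"
      unfolding antipode_right using bilin_right[OF G] unfolding lin_map_def by simp
  qed
  also have "\<dots> = sweedler (\<lambda>u r. G (u * S r) 1) q"
    by (intro sweedler_cong sweedler_counit_left bilin_lin_map_left[OF G] lin_map_mult_left lin_map_antipode)
  also have "\<dots> = G (sweedler (\<lambda>u r. u * S r) q) 1"
    by (rule lin_map_sweedler_comm[symmetric]) (rule bilin_left[OF G])
  also have "\<dots> = sc (\<epsilon> q) (G 1 1)"
    unfolding antipode_right using bilin_left[OF G] unfolding lin_map_def by simp
  finally show ?thesis .
qed

lemma sweedler_comult_antipode_mult:
  assumes G: "bilin G"
  shows "sweedler (\<lambda>p1 p2. sweedler (\<lambda>x y. sweedler (\<lambda>u v. G (x * u) (y * v)) p2) (S p1)) p =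
         sc (\<epsilon> p) (G 1 1)"
proof -
  have "sweedler (\<lambda>p1 p2. sweedler (\<lambda>x y. sweedler (\<lambda>u v. G (x * u) (y * v)) p2) (S p1)) p
      = sweedler (\<lambda>p1 p2. sweedler G (S p1 * p2)) p"
    by (intro sweedler_cong sweedler_mult[symmetric] G)
  also have "\<dots> = sweedler G (sweedler (\<lambda>p1 p2. S p1 * p2) p)"
    by (rule lin_map_sweedler_comm[symmetric]) (rule lin_map_sweedler[OF G])
  also have "\<dots> = sc (\<epsilon> p) (G 1 1)"
    unfolding antipode_left sweedler_scale[OF G] sweedler_one[OF G] ..
  finally show ?thesis .
qed

text \<open>The two previous identities let one insert and then cancel the expression
\<open>\<Sum> S(h\<^sub>1)\<^sub>1 h\<^sub>2 S(h\<^sub>4) \<otimes> S(h\<^sub>1)\<^sub>2 h\<^sub>3 S(h\<^sub>5)\<close>, turning \<open>\<Delta>(S h)\<close> into \<open>\<Sum> S(h\<^sub>2) \<otimes> S(h\<^sub>1)\<close>.\<close>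

lemma antipode_comult:
  assumes F: "bilin F"
  shows "sweedler F (S h) = sweedler (\<lambda>a b. F (S b) (S a)) h"
proof -
  have F_mult: "bilin (\<lambda>x' y'. F (x * x') (y * y'))" for x y
    by (intro bilinI bilin_lin_map_left[OF F] bilin_lin_map_right[OF F] lin_map_mult_left lin_map_id)
  define W where "W p1 p2 q =
    sweedler (\<lambda>x y. sweedler (\<lambda>u v. sweedler (\<lambda>a b. F (x * u * S b) (y * v * S a)) q) p2) (S p1)"
    for p1 p2 q
  have "bilin (\<lambda>x y. sweedler (\<lambda>u v. sweedler (\<lambda>a b. F (x * u * S b) (y * v * S a)) q) p2)" for p2 q
    by (intro bilinI lin_map_sweedler_param bilin_lin_map_left[OF F] bilin_lin_map_right[OF F]
        lin_map_mult_right lin_map_mult_left lin_map_id lin_map_antipode)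
  then have W: "trilin W"
    unfolding W_def
    by (intro trilinI lin_map_comp[OF lin_map_sweedler lin_map_antipode] lin_map_sweedler_param
        lin_map_sweedler bilinI bilin_lin_map_left[OF F] bilin_lin_map_right[OF F]
        lin_map_mult_right lin_map_mult_left lin_map_id lin_map_antipode)
  have "sweedler F (S h) = sweedler (\<lambda>p q. sc (\<epsilon> q) (sweedler F (S p))) h"
    by (rule sweedler_counit_right[symmetric])
      (rule lin_map_comp[OF lin_map_sweedler[OF F] lin_map_antipode])
  also have "\<dots> = sweedler (\<lambda>p q. sweedler (\<lambda>x y. sc (\<epsilon> q) (F x y)) (S p)) h"
    by (intro sweedler_cong lin_map_sweedler_comm lin_map_scale lin_map_id)
  also have "\<dots> = sweedler (\<lambda>p q. sweedler (\<lambda>x y. sweedler (\<lambda>q1 q2. sweedler (\<lambda>u v.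
      sweedler (\<lambda>a b. F (x * (u * S b)) (y * (v * S a))) q2) q1) q) (S p)) h"
    using sweedler_antipode_nested[OF F_mult] by simp
  also have "\<dots> = sweedler (\<lambda>p r. sweedler (\<lambda>p2 q. W p p2 q) r) h"
    unfolding W_def by (intro sweedler_cong sweedler_swap[THEN trans]) (simp add: mult.assoc)
  also have "\<dots> = sweedler (\<lambda>p q. sweedler (\<lambda>p1 p2. W p1 p2 q) p) h"
    by (rule sweedler_coassoc[OF W, symmetric])
  also have "\<dots> = sweedler (\<lambda>p q. sc (\<epsilon> p) (sweedler (\<lambda>a b. F (S b) (S a)) q)) h"
  proof (intro sweedler_cong)
    fix p q
    have "bilin (\<lambda>x' y'. sweedler (\<lambda>a b. F (x' * S b) (y' * S a)) q)"
      by (intro bilinI lin_map_sweedler_param bilin_lin_map_left[OF F] bilin_lin_map_right[OF F]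
          lin_map_mult_right lin_map_id)
    from sweedler_comult_antipode_mult[OF this, of p]
    show "sweedler (\<lambda>p1 p2. W p1 p2 q) p = sc (\<epsilon> p) (sweedler (\<lambda>a b. F (S b) (S a)) q)"
      unfolding W_def by simp
  qed
  also have "\<dots> = sweedler (\<lambda>a b. F (S b) (S a)) h"
    by (intro sweedler_counit_left lin_map_sweedler bilinI bilin_lin_map_left[OF F]
        bilin_lin_map_right[OF F] lin_map_antipode)
  finally show ?thesis .
qed

definition antipode_conj :: "('h \<Rightarrow> 'h) \<Rightarrow> 'h \<Rightarrow> 'h" where
  "antipode_conj f x = S (f (S x))"

lemma lin_map_antipode_conj: "lin_map f \<Longrightarrow> lin_map (antipode_conj f)"
  unfolding antipode_conj_def[abs_def] using lin_map_antipode unfolding lin_map_def by auto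

lemma antipode_conj_conv:
  assumes "lin_map f" and "lin_map g"
  shows "antipode_conj (conv f g) = conv (antipode_conj g) (antipode_conj f)"
proof
  fix h
  have "antipode_conj (conv f g) h = S (sweedler (\<lambda>a b. f (S b) * g (S a)) h)"
    unfolding antipode_conj_def conv_def
    by (subst antipode_comult) (auto intro: bilin_mult assms)
  also have "\<dots> = conv (antipode_conj g) (antipode_conj f) h"
    unfolding conv_def antipode_conj_def lin_map_sweedler_comm[OF lin_map_antipode] antipode_mult ..
  finally show "antipode_conj (conv f g) h = conv (antipode_conj g) (antipode_conj f) h" .
qed

lemma antipode_conj_conv_unit: "antipode_conj conv_unit = conv_unit"
  unfolding antipode_conj_def[abs_def] conv_unit_def[abs_def]
  using lin_map_antipode unfolding lin_map_def by (auto simp: counit_antipode antipode_one)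

lemma antipode_conj_funpow:
  assumes "\<And>h. S (S h) = h" and "\<And>x. S (f x) = f (S x)"
  shows "antipode_conj (f ^^ i) = f ^^ i"
proof -
  have "S ((f ^^ i) x) = (f ^^ i) (S x)" for x
    by (induction i) (auto simp: assms(2))
  then show ?thesis
    unfolding antipode_conj_def[abs_def] by (auto simp: assms(1))
qed

definition conv_prod :: "(nat \<Rightarrow> 'h \<Rightarrow> 'h) \<Rightarrow> nat \<Rightarrow> 'h \<Rightarrow> 'h" where
  "conv_prod \<phi> m h =
     sum_list (map (\<lambda>xs. prod_list (map (\<lambda>i. \<phi> i (xs ! i)) [0..<Suc m])) (comul_iter \<Delta> m h))"

lemma twisted_power_eq_conv_prod: "0 < n \<Longrightarrow> twisted_power \<Delta> f n = conv_prod (\<lambda>i. f ^^ i) (n - 1)"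
  unfolding twisted_power_def[abs_def] conv_prod_def[abs_def] by simp

lemma conv_prod_0: "conv_prod \<phi> 0 = \<phi> 0"
  unfolding conv_prod_def[abs_def] by simp

lemma conv_prod_Suc: "conv_prod \<phi> (Suc m) = conv (\<phi> 0) (conv_prod (\<lambda>i. \<phi> (Suc i)) m)"
proof
  fix h
  have upt: "[0..<Suc (Suc m)] = 0 # map Suc [0..<Suc m]"
    by (simp only: upt_conv_Cons[of 0 "Suc (Suc m)"] map_Suc_upt)
  have "sum_list (map (\<lambda>xs. prod_list (map (\<lambda>i. \<phi> i (xs ! i)) [0..<Suc (Suc m)]))
          (concat (map (\<lambda>(a,b). map (\<lambda>ys. a # ys) (comul_iter \<Delta> m b)) zs)))
      = sum_list (map (\<lambda>(a,b). \<phi> 0 a * conv_prod (\<lambda>i. \<phi> (Suc i)) m b) zs)" for zs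
    by (induction zs)
      (auto simp del: upt_Suc simp add: upt conv_prod_def sum_list_const_mult[symmetric] o_def)
  then show "conv_prod \<phi> (Suc m) h = conv (\<phi> 0) (conv_prod (\<lambda>i. \<phi> (Suc i)) m) h"
    unfolding conv_def sweedler_def by (simp add: conv_prod_def[of \<phi> "Suc m"])
qed

lemma conv_prod_cong: "(\<And>i. i \<le> m \<Longrightarrow> \<phi> i = \<psi> i) \<Longrightarrow> conv_prod \<phi> m = conv_prod \<psi> m"
  unfolding conv_prod_def[abs_def]
  by (intro ext arg_cong[where f=sum_list] map_cong arg_cong[where f=prod_list]) auto

lemma lin_map_conv_prod: "(\<And>i. i \<le> m \<Longrightarrow> lin_map (\<phi> i)) \<Longrightarrow> lin_map (conv_prod \<phi> m)"
proof (induction m arbitrary: \<phi>)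
  case 0
  then show ?case by (simp add: conv_prod_0)
next
  case (Suc m)
  have "lin_map (conv_prod (\<lambda>i. \<phi> (Suc i)) m)"
    by (rule Suc.IH) (use Suc.prems in auto)
  then show ?case
    unfolding conv_prod_Suc using Suc.prems by (intro lin_map_conv) auto
qed

lemma conv_prod_Suc_right:
  "(\<And>i. i \<le> Suc m \<Longrightarrow> lin_map (\<phi> i)) \<Longrightarrow> conv_prod \<phi> (Suc m) = conv (conv_prod \<phi> m) (\<phi> (Suc m))"
proof (induction m arbitrary: \<phi>)
  case 0
  then show ?case by (simp add: conv_prod_Suc conv_prod_0)
next
  case (Suc m)
  have IH: "conv_prod (\<lambda>i. \<phi> (Suc i)) (Suc m) = conv (conv_prod (\<lambda>i. \<phi> (Suc i)) m) (\<phi> (Suc (Suc m)))"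
    by (rule Suc.IH) (use Suc.prems in auto)
  have lin: "lin_map (conv_prod (\<lambda>i. \<phi> (Suc i)) m)"
    by (rule lin_map_conv_prod) (use Suc.prems in auto)
  show ?case
    unfolding conv_prod_Suc[of \<phi> "Suc m"] IH conv_prod_Suc[of \<phi> m]
    by (rule conv_assoc[symmetric]) (use Suc.prems lin in auto)
qed

lemma antipode_conj_conv_prod:
  "(\<And>i. i \<le> m \<Longrightarrow> lin_map (\<phi> i)) \<Longrightarrow>
   antipode_conj (conv_prod \<phi> m) = conv_prod (\<lambda>i. antipode_conj (\<phi> (m - i))) m"
proof (induction m arbitrary: \<phi>)
  case 0
  then show ?case by (simp add: conv_prod_0)
next
  case (Suc m)
  have IH: "antipode_conj (conv_prod (\<lambda>i. \<phi> (Suc i)) m) =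
            conv_prod (\<lambda>i. antipode_conj (\<phi> (Suc (m - i)))) m"
    by (rule Suc.IH) (use Suc.prems in auto)
  have lin: "lin_map (conv_prod (\<lambda>i. \<phi> (Suc i)) m)"
    by (rule lin_map_conv_prod) (use Suc.prems in auto)
  have "antipode_conj (conv_prod \<phi> (Suc m)) =
        conv (conv_prod (\<lambda>i. antipode_conj (\<phi> (Suc (m - i)))) m) (antipode_conj (\<phi> 0))"
    unfolding conv_prod_Suc antipode_conj_conv[OF Suc.prems[of 0] lin, simplified] IH ..
  also have "\<dots> = conv (conv_prod (\<lambda>i. antipode_conj (\<phi> (Suc m - i))) m)
                        (antipode_conj (\<phi> (Suc m - Suc m)))"
    by (simp add: conv_prod_cong[of m "\<lambda>i. antipode_conj (\<phi> (Suc (m - i)))"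
                     "\<lambda>i. antipode_conj (\<phi> (Suc m - i))"] Suc_diff_le)
  also have "\<dots> = conv_prod (\<lambda>i. antipode_conj (\<phi> (Suc m - i))) (Suc m)"
    by (rule conv_prod_Suc_right[symmetric]) (use Suc.prems in \<open>auto intro: lin_map_antipode_conj\<close>)
  finally show ?case .
qed

lemma conv_prod_reverse_tail:
  assumes lin: "\<And>i. lin_map (\<phi> i)" and fixed: "\<And>i. antipode_conj (\<phi> i) = \<phi> i"
    and \<phi>0: "\<phi> 0 = (\<lambda>x. x)" and \<psi>0: "\<psi> 0 = (\<lambda>x. x)"
    and \<psi>: "\<And>j. 1 \<le> j \<Longrightarrow> j \<le> m \<Longrightarrow> \<psi> j = \<phi> (Suc m - j)"
    and prod: "conv_prod \<phi> m = conv_unit"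
  shows "conv_prod \<psi> m = conv_unit"
proof (cases m)
  case 0
  then show ?thesis using prod \<phi>0 \<psi>0 by (simp add: conv_prod_0)
next
  case (Suc k)
  have "conv_unit = antipode_conj (conv_prod \<phi> m)"
    using prod antipode_conj_conv_unit by simp
  also have "\<dots> = conv_prod (\<lambda>i. \<phi> (m - i)) m"
    using antipode_conj_conv_prod[of m \<phi>] lin fixed by simp
  also have "\<dots> = conv (conv_prod (\<lambda>i. \<phi> (m - i)) k) (\<lambda>x. x)"
    unfolding Suc by (subst conv_prod_Suc_right) (auto simp: lin \<phi>0)
  finally have "conv (\<lambda>x. x) (conv_prod (\<lambda>i. \<phi> (m - i)) k) = conv_unit"
    by (intro conv_id_commute lin_map_conv_prod lin) simp
  moreover have "conv_prod \<psi> m = conv (\<lambda>x. x) (conv_prod (\<lambda>i. \<phi> (m - i)) k)"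
    unfolding Suc conv_prod_Suc \<psi>0 using \<psi> Suc
    by (auto intro!: arg_cong[where f="conv _"] conv_prod_cong)
  ultimately show ?thesis by simp
qed

lemma twisted_power_inv_eq_conv_unit:
  assumes involutive: "\<And>h. S (S h) = h"
    and f: "lin_map f" "bij f" "\<And>x. S (f x) = f (S x)"
    and N: "0 < N" "f ^^ N = id"
    and "twisted_power \<Delta> f N = conv_unit"
  shows "twisted_power \<Delta> (inv f) N = conv_unit"
proof -
  have "conv_prod (\<lambda>i. inv f ^^ i) (N - 1) = conv_unit"
  proof (rule conv_prod_reverse_tail[where \<phi>="\<lambda>i. f ^^ i"])
    show "lin_map (f ^^ i)" for i
      using f(1) by (induction i) (auto simp: lin_map_def)
    show "antipode_conj (f ^^ i) = f ^^ i" for i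
      using involutive f(3) by (rule antipode_conj_funpow)
    show "inv f ^^ j = f ^^ (Suc (N - 1) - j)" if "j \<le> N - 1" for j
      using funpow_inv_complement[OF f(2) N(2), of "N - j"] that N by auto
    show "conv_prod (\<lambda>i. f ^^ i) (N - 1) = conv_unit"
      using assms(7) N by (simp add: twisted_power_eq_conv_prod)
  qed auto
  with N show ?thesis
    by (simp add: twisted_power_eq_conv_prod)
qed

text \<open>A Hopf automorphism commutes with the antipode, since \<open>S \<circ> \<tau>\<close> and \<open>\<tau> \<circ> S\<close> are a left and a right
convolution inverse of \<open>\<tau>\<close>.\<close>

lemma hopf_automorphism_antipode_comm:
  assumes \<tau>: "hopf_automorphism sc \<Delta> \<epsilon> \<tau>"
  shows "S (\<tau> x) = \<tau> (S x)"
proof -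
  have lin_\<tau>: "lin_map \<tau>" and mult: "\<tau> (x * y) = \<tau> x * \<tau> y" and one: "\<tau> 1 = 1"
    and counit: "\<epsilon> (\<tau> x) = \<epsilon> x"
    and comult: "teq2 sc (\<Delta> (\<tau> x)) (map (\<lambda>(a,b). (\<tau> a, \<tau> b)) (\<Delta> x))" for x y
    using \<tau> unfolding hopf_automorphism_def lin_map_iff_linear by auto
  have "conv (\<lambda>x. S (\<tau> x)) \<tau> h = sweedler (\<lambda>a b. S a * b) (\<tau> h)" for h
  proof -
    from sum_list_bilin_teq2[OF bilin_mult[OF lin_map_antipode lin_map_id] comult[of h]]
    show ?thesis
      unfolding sweedler_def conv_def by (simp add: o_def case_prod_unfold)
  qed
  then have left: "conv (\<lambda>x. S (\<tau> x)) \<tau> = conv_unit"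
    unfolding antipode_left conv_unit_def counit by (simp add: fun_eq_iff)
  have "conv \<tau> (\<lambda>x. \<tau> (S x)) h = \<tau> (sweedler (\<lambda>a b. a * S b) h)" for h
    unfolding conv_def lin_map_sweedler_comm[OF lin_\<tau>] mult ..
  also have "\<tau> (sweedler (\<lambda>a b. a * S b) h) = conv_unit h" for h
    using lin_\<tau> unfolding antipode_right conv_unit_def lin_map_def by (simp add: one)
  finally have right: "conv \<tau> (\<lambda>x. \<tau> (S x)) = conv_unit" ..
  have "(\<lambda>x. S (\<tau> x)) = (\<lambda>x. \<tau> (S x))"
    using lin_map_comp[OF lin_map_antipode lin_\<tau>] lin_map_comp[OF lin_\<tau> lin_map_antipode]
    by (rule conv_inverse_unique[OF lin_\<tau> _ _ left right])
  then show ?thesis by metis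
qed

lemma twisted_exp_cond_inv_iff:
  assumes involutive: "\<And>h. S (S h) = h" and \<tau>: "hopf_automorphism sc \<Delta> \<epsilon> \<tau>"
    and finite_order: "\<exists>m>0. \<tau> ^^ m = id"
  shows "twisted_exp_cond sc \<Delta> \<epsilon> (inv \<tau>) n \<longleftrightarrow> twisted_exp_cond sc \<Delta> \<epsilon> \<tau> n"
proof -
  have bij: "bij \<tau>" and lin: "lin_map \<tau>"
    using \<tau> unfolding hopf_automorphism_def lin_map_iff_linear by auto
  have comm: "S (\<tau> x) = \<tau> (S x)" for x
    using hopf_automorphism_antipode_comm[OF \<tau>] .
  have comm_inv: "S (inv \<tau> x) = inv \<tau> (S x)" for x
    using comm[of "inv \<tau> x"] bij by (metis bij_inv_eq_iff)
  have "twisted_power \<Delta> (inv \<tau>) n = conv_unit \<longleftrightarrow> twisted_power \<Delta> \<tau> n = conv_unit"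
    if "0 < n" "fun_order \<tau> dvd n"
  proof -
    have "\<tau> ^^ n = id" and "inv \<tau> ^^ n = id"
      using funpow_eq_id_if_fun_order_dvd[OF finite_order that(2)] funpow_inv_eq_id_iff[OF bij]
      by auto
    then show ?thesis
      using twisted_power_inv_eq_conv_unit[OF involutive lin bij comm that(1)]
        twisted_power_inv_eq_conv_unit[OF involutive lin_map_inv[OF lin bij] bij_imp_bij_inv[OF bij]
          comm_inv that(1)]
      by (auto simp: inv_inv_eq[OF bij])
  qed
  then show ?thesis
    unfolding twisted_exp_cond_def fun_order_inv[OF bij]
    by (auto simp: conv_unit_def fun_eq_iff)
qed

end

theorem corollary3p5:
  fixes sc :: "'k::field \<Rightarrow> 'h::ring_1 \<Rightarrow> 'h"
    and \<Delta> :: "'h \<Rightarrow> ('h \<times> 'h) list"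
    and \<epsilon> :: "'h \<Rightarrow> 'k"
    and S \<tau> :: "'h \<Rightarrow> 'h"
  assumes "hopf_algebra sc \<Delta> \<epsilon> S"
    and "\<forall>h. S (S h) = h"
    and "hopf_automorphism sc \<Delta> \<epsilon> \<tau>"
    and "\<exists>m>0. \<tau> ^^ m = id"
  shows "twisted_exp sc \<Delta> \<epsilon> (inv \<tau>) = twisted_exp sc \<Delta> \<epsilon> \<tau>"
proof -
  interpret hopf sc \<Delta> \<epsilon> S
    using assms(1) by unfold_locales
  have "twisted_exp_cond sc \<Delta> \<epsilon> (inv \<tau>) = twisted_exp_cond sc \<Delta> \<epsilon> \<tau>"
    using twisted_exp_cond_inv_iff assms(2-4) by blast
  then show ?thesis
    unfolding twisted_exp_def by simp
qed

end
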